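(* Let $K\subset\mathbb{R}^m$ be a pointed, closed, convex cone with nonempty interior which is finitely generated, let $C\subset\mathbb{R}^m$ be a finite set with $0\notin C$ and $K^*=\operatorname{cone}(\operatorname{conv}(C))$, and let $F:\mathbb{R}^n\to\mathbb{R}^m$ be continuously differentiable. Define $h(x,d)=\max\{\langle JF(x)d,w\rangle : w\in C\}$ and $v(x)=\arg\min_{d}\{h(x,d)+\tfrac12\|d\|^2\}$. Fix $0<\rho<1$, $0<\delta<1$, $\mu>2$, and $e\in\operatorname{int}(K)$ with $\langle w,e\rangle\le1$ for all $w\in C$. Let $x^0\in\mathbb{R}^n$ and assume: (A1) there is an open set $\Lambda$ containing $\mathcal{L}=\{x: F(x)\preceq_K F(x^0)\}$ such that $\|JF(x)-JF(y)\|\le L\|x-y\|$ for all $x,y\in\Lambda$; (A2) every sequence $\{D_k\}\subset F(\mathcal{L})$ with $D_{k+1}\preceq_K D_k$ for all $k$ admits $D\in\mathbb{R}^m$ with $D\preceq_K D_k$ for all $k$. Let $\{x^k\}$ be an infinite sequence generated as follows: $d^0=v(x^0)$; for $k\ge1$, $d^k=v(x^k)+\beta_k d^{k-1}$ with $$\beta_k=\frac{-h(x^k,v(x^k))\big(|h(x^{k-1},v(x^k))|+h(x^{k-1},v(x^k))\big)}{\max\big\{\mu|h(x^k,d^{k-1})h(x^{k-1},v(x^k))|,\ -\mu h(x^{k-1},v(x^{k-1}))|h(x^{k-1},v(x^k))|\big\}};$$ $x^{k+1}=x^k+\alpha_kd^k$, where, with $\tau_k=-h(x^k,d^k)/\|d^k\|^2$,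 $\alpha_k$ is the largest element of $\{\tau_k,\delta\tau_k,\delta^2\tau_k,\dots\}$ satisfying the Armijo condition $$F(x^k+\alpha_kd^k)\preceq_K F(x^k)+\rho\alpha_k h(x^k,d^k)e.$$ Then $$\sum_{k\ge0}\frac{h^2(x^k,d^k)}{\|d^k\|^2}<\infty.$$
   Context: $u\preceq_K v$ means $v-u\in K$. $K^*$ is the positive polar cone of $K$ and $JF$ the Jacobian of $F$. The sequence is assumed infinite, i.e. $v(x^k)\neq0$ for all $k$ (equivalently no $x^k$ is a $K$-Pareto critical point). *)

theory Defs
  imports "HOL-Analysis.Analysis"
begin

definition cone_le :: "'a::real_vector set \<Rightarrow> 'a \<Rightarrow> 'a \<Rightarrow> bool" where
  "cone_le K u v \<longleftrightarrow> v - u \<in> K"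

definition pos_polar :: "'a::real_inner set \<Rightarrow> 'a set" where
  "pos_polar K = {w. \<forall>k\<in>K. 0 \<le> w \<bullet> k}"

definition pointed :: "'a::real_vector set \<Rightarrow> bool" where
  "pointed K \<longleftrightarrow> K \<inter> uminus ` K \<subseteq> {0}"

text \<open>h(x,d) = max { <JF(x) d, w> : w \<in> C }, where J x is the Jacobian matrix of F at x.\<close>
definition hfun :: "(real^'n::finite \<Rightarrow> real^'n^'m::finite) \<Rightarrow> (real^'m) set \<Rightarrow> real^'n \<Rightarrow> real^'n \<Rightarrow> real" where
  "hfun J C x d = Max ((\<lambda>w. (J x *v d) \<bullet> w) ` C)"

text \<open>v(x) = argmin_d h(x,d) + 1/2 ||d||^2 (the minimiser is unique by strong convexity).\<close>
definition vdir :: "(real^'n::finite \<Rightarrow> real^'n^'m::finite) \<Rightarrow> (real^'m) set \<Rightarrow> real^'n \<Rightarrow> real^'n" where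
  "vdir J C x = (THE d. \<forall>d'. hfun J C x d + (1/2) * (norm d)^2 \<le> hfun J C x d' + (1/2) * (norm d')^2)"

end

theory Submission
  imports Defs
begin

text \<open>
  Since h(x, .) is sublinear and \<beta>_k is built so that
  \<beta>_k h(x^k, d^{k-1}) \<le> -(2/\<mu>) h(x^k, v(x^k)), every d^k satisfies the sufficient descent
  condition h(x^k, d^k) \<le> (1 - 2/\<mu>) h(x^k, v(x^k)) < 0. Testing the Armijo condition against a
  generator w \<in> C, for which w \<bullet> e > 0, and telescoping against the lower bound given by (A2)
  yields \<Sum> \<alpha>_k (-h(x^k, d^k)) < \<infinity>. Each term h(x^k, d^k)^2 / \<parallel>d^k\<parallel>^2 is a bounded
  multiple of \<alpha>_k (-h(x^k, d^k)): either \<alpha>_k = \<tau>_k and the two coincide, or the trial step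
  \<alpha>_k / \<delta> was rejected, which by the descent lemma for the Lipschitz Jacobian on \<Lambda> bounds
  \<alpha>_k from below by a multiple of \<tau>_k.
\<close>

lemma hfun_ge: "finite C \<Longrightarrow> w \<in> C \<Longrightarrow> (J x *v d) \<bullet> w \<le> hfun J C x d"
  unfolding hfun_def by (rule Max_ge) auto

lemma hfun_attained:
  assumes "finite C" "C \<noteq> {}"
  obtains w where "w \<in> C" "hfun J C x d = (J x *v d) \<bullet> w"
proof -
  have "hfun J C x d \<in> (\<lambda>w. (J x *v d) \<bullet> w) ` C"
    unfolding hfun_def using assms by (intro Max_in) auto
  then show ?thesis using that by blast
qed

lemma hfun_zero: "finite C \<Longrightarrow> C \<noteq> {} \<Longrightarrow> hfun J C x 0 = 0"
  by (metis hfun_attained inner_zero_left matrix_vector_mult_0_right)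

lemma hfun_add_le:
  assumes "finite C" "C \<noteq> {}"
  shows "hfun J C x (u + v) \<le> hfun J C x u + hfun J C x v"
proof -
  obtain w where "w \<in> C" and "hfun J C x (u + v) = (J x *v u) \<bullet> w + (J x *v v) \<bullet> w"
    using hfun_attained[OF assms, of J x "u + v"]
    by (metis matrix_vector_right_distrib inner_add_left)
  then show ?thesis using hfun_ge[OF assms(1)] by (metis add_mono)
qed

lemma hfun_scaleR_le:
  assumes "finite C" "C \<noteq> {}" "0 \<le> b"
  shows "hfun J C x (b *\<^sub>R u) \<le> b * hfun J C x u"
proof -
  obtain w where "w \<in> C" and "hfun J C x (b *\<^sub>R u) = b * ((J x *v u) \<bullet> w)"
    using hfun_attained[OF assms(1,2), of J x "b *\<^sub>R u"] by (metis matrix_vector_mult_scaleR inner_scaleR_left)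
  then show ?thesis using hfun_ge[OF assms(1)] assms(3) by (metis mult_left_mono)
qed

lemma hfun_linear_bound:
  assumes "finite C" "C \<noteq> {}"
  obtains B where "0 \<le> B" "\<And>u. \<bar>hfun J C x u\<bar> \<le> B * norm u"
proof -
  obtain W where "W > 0" and W: "\<And>w. w \<in> C \<Longrightarrow> norm w \<le> W"
    using bounded_pos finite_imp_bounded[OF assms(1)] by metis
  define B where "B = onorm (\<lambda>u. J x *v u) * W"
  have "\<bar>hfun J C x u\<bar> \<le> B * norm u" for u
  proof -
    obtain w where w: "w \<in> C" "hfun J C x u = (J x *v u) \<bullet> w"
      using hfun_attained[OF assms] by blast
    have "\<bar>(J x *v u) \<bullet> w\<bar> \<le> norm (J x *v u) * norm w" by (rule Cauchy_Schwarz_ineq2)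
    also have "\<dots> \<le> (onorm (\<lambda>u. J x *v u) * norm u) * W"
      using onorm[OF matrix_vector_mul_bounded_linear, of "J x" u] W[OF w(1)]
        onorm_pos_le[OF matrix_vector_mul_bounded_linear, of "J x"]
      by (intro mult_mono) auto
    finally show ?thesis using w by (simp add: B_def algebra_simps)
  qed
  moreover have "0 \<le> B"
    using onorm_pos_le[OF matrix_vector_mul_bounded_linear, of "J x"] \<open>W > 0\<close> by (simp add: B_def)
  ultimately show ?thesis using that by blast
qed

lemma continuous_on_hfun:
  assumes "finite C" "C \<noteq> {}"
  shows "continuous_on UNIV (hfun J C x)"
proof -
  obtain B where "0 \<le> B" and B: "\<And>u. \<bar>hfun J C x u\<bar> \<le> B * norm u"
    using hfun_linear_bound[OF assms] by blast
  have "\<bar>hfun J C x u - hfun J C x v\<bar> \<le> B * norm (u - v)" for u v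
    using hfun_add_le[OF assms, of J x v "u - v"] hfun_add_le[OF assms, of J x u "v - u"]
      B[of "u - v"] B[of "v - u"] by (auto simp: abs_le_iff norm_minus_commute)
  then show ?thesis
    by (intro lipschitz_on_continuous_on[of B])
       (auto simp: lipschitz_on_def dist_norm dist_real_def \<open>0 \<le> B\<close>)
qed

lemma ex_min_hfun_prox:
  fixes J :: "real^'n::finite \<Rightarrow> real^'n^'m::finite"
  assumes "finite C" "C \<noteq> {}"
  obtains d where
    "\<And>d'. hfun J C x d + (1/2) * (norm d)^2 \<le> hfun J C x d' + (1/2) * (norm d')^2"
proof -
  define g where "g d = hfun J C x d + (1/2) * (norm d)^2" for d
  obtain B where "0 \<le> B" and B: "\<And>u. \<bar>hfun J C x u\<bar> \<le> B * norm u"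
    using hfun_linear_bound[OF assms] by blast
  have "continuous_on (cball 0 (2 * B)) g"
    unfolding g_def
    by (intro continuous_intros continuous_on_subset[OF continuous_on_hfun[OF assms]]) auto
  then obtain d where dmin: "\<forall>y\<in>cball 0 (2 * B). g d \<le> g y"
    using continuous_attains_inf[OF compact_cball, of 0 "2 * B" g] \<open>0 \<le> B\<close> by auto
  have "g d \<le> g y" for y
  proof (cases "norm y \<le> 2 * B")
    case False
    have "g d \<le> g 0" using dmin \<open>0 \<le> B\<close> by simp
    also have "\<dots> = 0" using hfun_zero[OF assms] by (simp add: g_def)
    also have "\<dots> \<le> norm y * ((1/2) * norm y - B)" using False by simp
    also have "\<dots> \<le> g y" using B[of y] by (simp add: g_def power2_eq_square algebra_simps)
    finally show ?thesis .
  qed (use dmin in auto)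
  then show ?thesis using that unfolding g_def by blast
qed

lemma hfun_prox_min_unique:
  assumes "finite C" "C \<noteq> {}"
    and min1: "\<And>d. hfun J C x d1 + (1/2) * (norm d1)^2 \<le> hfun J C x d + (1/2) * (norm d)^2"
    and min2: "\<And>d. hfun J C x d2 + (1/2) * (norm d2)^2 \<le> hfun J C x d + (1/2) * (norm d)^2"
  shows "d1 = d2"
proof (rule ccontr)
  assume "d1 \<noteq> d2"
  define m where "m = (1/2) *\<^sub>R (d1 + d2)"
  have "hfun J C x m \<le> (1/2) * (hfun J C x d1 + hfun J C x d2)"
    using hfun_scaleR_le[OF assms(1,2), of "1/2" J x "d1 + d2"] hfun_add_le[OF assms(1,2), of J x d1 d2]
    by (simp add: m_def)
  moreover have "(norm m)^2 = (1/2) * (norm d1)^2 + (1/2) * (norm d2)^2 - (1/4) * (norm (d1 - d2))^2"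
    by (simp add: m_def power2_norm_eq_inner inner_commute algebra_simps)
  moreover have "(norm (d1 - d2))^2 > 0" using \<open>d1 \<noteq> d2\<close> by simp
  ultimately show False using min1[of m] min2[of m] by (simp add: algebra_simps)
qed

lemma vdir_minimal:
  fixes J :: "real^'n::finite \<Rightarrow> real^'n^'m::finite"
  assumes "finite C" "C \<noteq> {}"
  shows "hfun J C x (vdir J C x) + (1/2) * (norm (vdir J C x))^2
           \<le> hfun J C x d + (1/2) * (norm d)^2"
proof -
  obtain d0 where "\<And>d'. hfun J C x d0 + (1/2) * (norm d0)^2 \<le> hfun J C x d' + (1/2) * (norm d')^2"
    using ex_min_hfun_prox[OF assms] by blast
  then have "\<exists>!d. \<forall>d'. hfun J C x d + (1/2) * (norm d)^2 \<le> hfun J C x d' + (1/2) * (norm d')^2"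
    using hfun_prox_min_unique[OF assms] by blast
  then show ?thesis unfolding vdir_def by (rule theI'[THEN spec])
qed

lemma hfun_vdir_neg:
  fixes J :: "real^'n::finite \<Rightarrow> real^'n^'m::finite"
  assumes "finite C" "C \<noteq> {}" "vdir J C x \<noteq> 0"
  shows "hfun J C x (vdir J C x) < 0"
proof -
  have "0 < (norm (vdir J C x))^2" using assms(3) by simp
  then show ?thesis using vdir_minimal[OF assms(1,2), of J x 0, simplified] hfun_zero[OF assms(1,2), of J x] by linarith
qed

lemma mem_cone_if_pos_polar_nonneg:
  fixes K :: "'a::euclidean_space set"
  assumes "closed K" "convex K" "cone K" "K \<noteq> {}"
    and nonneg: "\<forall>w\<in>pos_polar K. 0 \<le> w \<bullet> z"
  shows "z \<in> K"
proof (rule ccontr)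
  assume "z \<notin> K"
  then obtain a b where az: "a \<bullet> z < b" and aK: "\<forall>y\<in>K. b < a \<bullet> y"
    using separating_hyperplane_closed_point[OF assms(2,1)] by blast
  have "0 \<in> K" using assms(3,4) cone_contains_0 by blast
  then have "b < 0" using aK by auto
  have "a \<in> pos_polar K"
    unfolding pos_polar_def
  proof (intro CollectI ballI leI notI)
    fix y assume "y \<in> K" and "a \<bullet> y < 0"
    then have "(b / (a \<bullet> y)) *\<^sub>R y \<in> K"
      using \<open>cone K\<close> \<open>b < 0\<close> by (intro mem_cone) (auto simp: divide_nonpos_neg less_imp_le)
    moreover have "a \<bullet> ((b / (a \<bullet> y)) *\<^sub>R y) = b" using \<open>a \<bullet> y < 0\<close> by simp
    ultimately show False using aK by fastforce
  qed
  then show False using nonneg az \<open>b < 0\<close> by fastforce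
qed

lemma mem_cone_if_generators_nonneg:
  fixes K :: "'a::euclidean_space set"
  assumes "closed K" "convex K" "cone K" "K \<noteq> {}"
    and gen: "pos_polar K = cone hull (convex hull C)"
    and nonneg: "\<forall>w\<in>C. 0 \<le> w \<bullet> z"
  shows "z \<in> K"
proof (rule mem_cone_if_pos_polar_nonneg[OF assms(1-4)])
  let ?H = "{w. 0 \<le> z \<bullet> w}"
  have "convex hull C \<subseteq> ?H"
    using nonneg by (intro hull_minimal convex_halfspace_ge) (auto simp: inner_commute)
  then have "cone hull (convex hull C) \<subseteq> ?H"
    by (rule hull_minimal) (auto simp: cone_def)
  then show "\<forall>w\<in>pos_polar K. 0 \<le> w \<bullet> z" using gen by (auto simp: inner_commute)
qed

lemma cone_le_trans:
  assumes "convex K" "cone K" "cone_le K a b" "cone_le K b c"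
  shows "cone_le K a c"
proof -
  have "(b - a) + (c - b) \<in> K"
    using assms convex_cone[of K] unfolding cone_le_def by blast
  then show ?thesis unfolding cone_le_def by simp
qed

lemma cone_le_add_scaleR_nonpos: "cone K \<Longrightarrow> e \<in> K \<Longrightarrow> t \<le> 0 \<Longrightarrow> cone_le K (y + t *\<^sub>R e) y"
  unfolding cone_le_def using mem_cone[of K e "- t"] by simp

lemma pos_polar_inner_mono: "w \<in> pos_polar K \<Longrightarrow> cone_le K u v \<Longrightarrow> w \<bullet> u \<le> w \<bullet> v"
  unfolding pos_polar_def cone_le_def by (auto simp: inner_diff_right)

lemma pos_polar_inner_interior_pos:
  assumes "w \<in> pos_polar K" "w \<noteq> 0" "e \<in> interior K"
  shows "0 < w \<bullet> e"
proof -
  obtain r where "r > 0" "ball e r \<subseteq> K"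
    using assms(3) by (meson mem_interior)
  define c where "c = (r / 2) / norm w"
  have "e - c *\<^sub>R w \<in> ball e r"
    using \<open>r > 0\<close> assms(2) by (simp add: c_def dist_norm)
  then have "0 \<le> w \<bullet> (e - c *\<^sub>R w)"
    using assms(1) \<open>ball e r \<subseteq> K\<close> unfolding pos_polar_def by blast
  also have "\<dots> = w \<bullet> e - (r / 2) * norm w"
    using assms(2) by (simp add: c_def inner_diff_right power2_norm_eq_inner[symmetric] power2_eq_square)
  finally have "(r / 2) * norm w \<le> w \<bullet> e" by simp
  moreover have "0 < (r / 2) * norm w" using \<open>r > 0\<close> assms(2) by simp
  ultimately show ?thesis by linarith
qed

lemma inner_F_mean_value:
  fixes F :: "real^'n::finite \<Rightarrow> real^'m::finite" and J :: "real^'n \<Rightarrow> real^'n^'m"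
  assumes F_deriv: "\<And>z. (F has_derivative (\<lambda>u. J z *v u)) (at z)" and "0 < t"
  obtains \<xi> where "0 < \<xi>" "\<xi> < t"
    "w \<bullet> F (x + t *\<^sub>R d) - w \<bullet> F x = t * (w \<bullet> (J (x + \<xi> *\<^sub>R d) *v d))"
proof -
  define \<phi> where "\<phi> s = w \<bullet> F (x + s *\<^sub>R d)" for s
  have \<phi>_deriv: "(\<phi> has_derivative (\<lambda>h. w \<bullet> (J (x + s *\<^sub>R d) *v (h *\<^sub>R d)))) (at s)" for s
  proof -
    have "((\<lambda>s. x + s *\<^sub>R d) has_derivative (\<lambda>h. h *\<^sub>R d)) (at s)"
      by (auto intro!: derivative_eq_intros)
    from diff_chain_at[OF this F_deriv] show ?thesis
      unfolding \<phi>_def o_def by (rule has_derivative_inner_right)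
  qed
  then have "continuous_on {0..t} \<phi>"
    by (intro continuous_at_imp_continuous_on ballI has_derivative_continuous)
  from mvt[OF \<open>0 < t\<close> this \<phi>_deriv] obtain \<xi> where "0 < \<xi>" "\<xi> < t"
    and "\<phi> t - \<phi> 0 = w \<bullet> (J (x + \<xi> *\<^sub>R d) *v ((t - 0) *\<^sub>R d))" .
  then show ?thesis
    using that by (simp add: \<phi>_def matrix_vector_mult_scaleR)
qed

lemma inner_F_step_le:
  fixes F :: "real^'n::finite \<Rightarrow> real^'m::finite" and J :: "real^'n \<Rightarrow> real^'n^'m"
  assumes F_deriv: "\<And>z. (F has_derivative (\<lambda>u. J z *v u)) (at z)"
    and lip: "\<forall>y\<in>\<Lambda>. \<forall>z\<in>\<Lambda>. onorm (\<lambda>u. (J y - J z) *v u) \<le> L * norm (y - z)"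
    and seg: "\<forall>s\<in>{0..t}. x + s *\<^sub>R d \<in> \<Lambda>" and "0 < t"
  shows "w \<bullet> F (x + t *\<^sub>R d) - w \<bullet> F x
           \<le> t * ((J x *v d) \<bullet> w) + t^2 * (\<bar>L\<bar> * norm w * (norm d)^2)"
proof -
  obtain \<xi> where "0 < \<xi>" "\<xi> < t"
    and mvt_eq: "w \<bullet> F (x + t *\<^sub>R d) - w \<bullet> F x = t * (w \<bullet> (J (x + \<xi> *\<^sub>R d) *v d))"
    using inner_F_mean_value[OF F_deriv \<open>0 < t\<close>] by blast
  define A where "A = J (x + \<xi> *\<^sub>R d) - J x"
  have "x \<in> \<Lambda>" using bspec[OF seg, of 0] \<open>0 < t\<close> by simp
  moreover have "x + \<xi> *\<^sub>R d \<in> \<Lambda>" using seg \<open>0 < \<xi>\<close> \<open>\<xi> < t\<close> by simp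
  ultimately have "onorm (\<lambda>u. A *v u) \<le> L * norm ((x + \<xi> *\<^sub>R d) - x)"
    using lip unfolding A_def by blast
  also have "\<dots> = L * (\<xi> * norm d)"
    using \<open>0 < \<xi>\<close> by (simp only: add_diff_cancel_left' norm_scaleR abs_of_pos)
  also have "\<dots> \<le> \<bar>L\<bar> * (t * norm d)"
    using \<open>0 < \<xi>\<close> \<open>\<xi> < t\<close> by (intro mult_mono) (auto intro: mult_right_mono)
  finally have onorm_A: "onorm (\<lambda>u. A *v u) \<le> \<bar>L\<bar> * (t * norm d)" .
  have "w \<bullet> (A *v d) \<le> norm w * norm (A *v d)" by (rule norm_cauchy_schwarz)
  also have "\<dots> \<le> norm w * (onorm (\<lambda>u. A *v u) * norm d)"
    by (intro mult_left_mono onorm matrix_vector_mul_bounded_linear) simp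
  also have "\<dots> \<le> norm w * ((\<bar>L\<bar> * (t * norm d)) * norm d)"
    using onorm_A by (intro mult_left_mono mult_right_mono) auto
  finally have "w \<bullet> (A *v d) \<le> t * (\<bar>L\<bar> * norm w * (norm d)^2)"
    by (simp add: power2_eq_square algebra_simps)
  moreover have "w \<bullet> (J (x + \<xi> *\<^sub>R d) *v d) = (J x *v d) \<bullet> w + w \<bullet> (A *v d)"
    by (simp add: A_def matrix_vector_mult_diff_rdistrib inner_diff_right inner_commute[of w "J x *v d"])
  ultimately have "w \<bullet> (J (x + \<xi> *\<^sub>R d) *v d) \<le> (J x *v d) \<bullet> w + t * (\<bar>L\<bar> * norm w * (norm d)^2)"
    by linarith
  from mult_left_mono[OF this, of t] show ?thesis
    using mvt_eq \<open>0 < t\<close> by (simp add: power2_eq_square algebra_simps)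
qed

lemma segment_extends_in_open:
  fixes x d :: "'a::real_normed_vector"
  assumes "open \<Lambda>" "0 \<le> t" and seg: "\<forall>s\<in>{0..t}. x + s *\<^sub>R d \<in> \<Lambda>"
  obtains \<epsilon> where "\<epsilon> > 0" "\<forall>s\<in>{0..t + \<epsilon>}. x + s *\<^sub>R d \<in> \<Lambda>"
proof -
  have "open ((\<lambda>s. x + s *\<^sub>R d) -` \<Lambda>)"
    by (rule continuous_open_vimage[OF assms(1)]) (intro continuous_intros)
  moreover have "t \<in> (\<lambda>s. x + s *\<^sub>R d) -` \<Lambda>" using seg assms(2) by auto
  ultimately obtain r where "r > 0" and r: "ball t r \<subseteq> (\<lambda>s. x + s *\<^sub>R d) -` \<Lambda>"
    by (meson openE)
  have "x + s *\<^sub>R d \<in> \<Lambda>" if "s \<in> {0..t + r / 2}" for s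
  proof (cases "s \<le> t")
    case False
    then have "s \<in> ball t r" using that \<open>r > 0\<close> by (auto simp: dist_real_def)
    then show ?thesis using r by auto
  qed (use seg that in auto)
  then show ?thesis using that \<open>r > 0\<close> by (meson half_gt_zero)
qed

lemma interval_continuation:
  fixes P :: "real \<Rightarrow> bool"
  assumes closed: "closed {s. P s}" and "P 0"
    and step: "\<And>t. 0 \<le> t \<Longrightarrow> t < a \<Longrightarrow> \<forall>s\<in>{0..t}. P s \<Longrightarrow> \<exists>\<epsilon>>0. \<forall>s\<in>{t..t + \<epsilon>}. P s"
  shows "\<forall>s\<in>{0..a}. P s"
proof (rule ccontr)
  define B where "B = {s\<in>{0..a}. \<not> P s}"
  assume not_all: "\<not> ?thesis"
  then have "B \<noteq> {}" by (auto simp: B_def)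
  have "bdd_below B" by (auto simp: B_def bdd_below_def)
  define t where "t = Inf B"
  have "0 \<le> t" "t \<le> a"
    using \<open>B \<noteq> {}\<close> \<open>bdd_below B\<close> by (auto simp: t_def B_def intro: cInf_greatest cInf_lower2)
  have "P s" if "0 \<le> s" "s < t" for s
    using that cInf_lower[OF _ \<open>bdd_below B\<close>, of s] \<open>t \<le> a\<close> by (force simp: t_def B_def)
  then have good: "\<forall>s\<in>{0..t}. P s"
  proof (cases "t = 0")
    case False
    then have "{0..t} = closure {0..<t}" using \<open>0 \<le> t\<close> by simp
    also have "\<dots> \<subseteq> {s. P s}"
      using \<open>\<And>s. 0 \<le> s \<Longrightarrow> s < t \<Longrightarrow> P s\<close> by (intro closure_minimal[OF _ closed]) auto
    finally show ?thesis by auto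
  qed (use \<open>P 0\<close> in auto)
  then have "t < a" using \<open>t \<le> a\<close> not_all by force
  then obtain \<epsilon> where "\<epsilon> > 0" and "\<forall>s\<in>{t..t + \<epsilon>}. P s" using step \<open>0 \<le> t\<close> good by blast
  then have "t + \<epsilon> \<le> s" if "s \<in> B" for s
    using that good by (force simp: B_def)
  then have "t + \<epsilon> \<le> t" unfolding t_def using \<open>B \<noteq> {}\<close> by (intro cInf_greatest)
  then show False using \<open>\<epsilon> > 0\<close> by simp
qed

locale armijo_setting =
  fixes K C :: "(real^'m::finite) set" and F :: "real^'n::finite \<Rightarrow> real^'m"
    and J :: "real^'n \<Rightarrow> real^'n^'m" and \<rho> :: real and e :: "real^'m"
    and \<Lambda> :: "(real^'n) set" and L Lp :: real and x0 :: "real^'n"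
  assumes K_closed: "closed K" and K_convex: "convex K" and K_cone: "cone K"
    and C_fin: "finite C" and C_0: "0 \<notin> C" and C_gen: "pos_polar K = cone hull (convex hull C)"
    and F_deriv: "\<And>z. (F has_derivative (\<lambda>u. J z *v u)) (at z)"
    and \<Lambda>_open: "open \<Lambda>" and level_set_sub: "{z. cone_le K (F z) (F x0)} \<subseteq> \<Lambda>"
    and J_lipschitz: "\<forall>y\<in>\<Lambda>. \<forall>z\<in>\<Lambda>. onorm (\<lambda>u. (J y - J z) *v u) \<le> L * norm (y - z)"
    and e_int: "e \<in> interior K" and e_C: "\<forall>w\<in>C. w \<bullet> e \<le> 1"
    and \<rho>: "0 < \<rho>" "\<rho> < 1"
    and Lp_pos: "0 < Lp" and Lp: "\<forall>w\<in>C. \<bar>L\<bar> * norm w \<le> Lp"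
begin

lemma e_in_K: "e \<in> K"
  using e_int interior_subset by blast

lemma K_nonempty: "K \<noteq> {}"
  using e_in_K by blast

lemma C_nonempty: "C \<noteq> {}"
proof
  assume "C = {}"
  then have "pos_polar K = {}" using C_gen by (simp add: cone_hull_empty)
  moreover have "0 \<in> pos_polar K" by (simp add: pos_polar_def)
  ultimately show False by simp
qed

lemma C_sub_pos_polar: "C \<subseteq> pos_polar K"
  using C_gen by (metis hull_subset subset_trans)

lemma K_le_trans: "cone_le K a b \<Longrightarrow> cone_le K b c \<Longrightarrow> cone_le K a c"
  using cone_le_trans[OF K_convex K_cone] .

lemma armijo_decrease:
  assumes "0 \<le> t" "hfun J C x d \<le> 0"
    and "cone_le K (F (x + t *\<^sub>R d)) (F x + (\<rho> * t * hfun J C x d) *\<^sub>R e)"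
  shows "cone_le K (F (x + t *\<^sub>R d)) (F x)"
proof -
  have "\<rho> * t * hfun J C x d \<le> 0"
    using assms(1,2) \<rho> by (simp add: mult_nonneg_nonpos)
  then show ?thesis
    using K_le_trans[OF assms(3) cone_le_add_scaleR_nonpos[OF K_cone e_in_K]] by blast
qed

lemma closed_level_set: "closed {s. cone_le K (F (x + s *\<^sub>R d)) (F x0)}"
proof -
  have "isCont (\<lambda>s. F (x + s *\<^sub>R d)) s" for s
    by (rule isCont_o2[OF _ has_derivative_continuous[OF F_deriv]]) (intro continuous_intros)
  then have "closed ((\<lambda>s. F x0 - F (x + s *\<^sub>R d)) -` K)"
    by (intro continuous_closed_vimage[OF K_closed] continuous_intros)
  then show ?thesis by (simp add: cone_le_def vimage_def)
qed

lemma armijo_if_segment_in_\<Lambda>: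
  assumes seg: "\<forall>s\<in>{0..t}. x + s *\<^sub>R d \<in> \<Lambda>" and "0 < t"
    and "hfun J C x d < 0" and small: "t * Lp * (norm d)^2 \<le> (1 - \<rho>) * (- hfun J C x d)"
  shows "cone_le K (F (x + t *\<^sub>R d)) (F x + (\<rho> * t * hfun J C x d) *\<^sub>R e)"
  unfolding cone_le_def
proof (rule mem_cone_if_generators_nonneg[OF K_closed K_convex K_cone K_nonempty C_gen], intro ballI)
  fix w assume "w \<in> C"
  let ?h = "hfun J C x d"
  have "w \<bullet> F (x + t *\<^sub>R d) - w \<bullet> F x \<le> t * ((J x *v d) \<bullet> w) + t^2 * (\<bar>L\<bar> * norm w * (norm d)^2)"
    by (rule inner_F_step_le[OF F_deriv J_lipschitz seg \<open>0 < t\<close>])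
  also have "\<dots> \<le> t * ?h + t^2 * (Lp * (norm d)^2)"
    using hfun_ge[OF C_fin \<open>w \<in> C\<close>, of J x d] Lp \<open>w \<in> C\<close> \<open>0 < t\<close>
    by (intro add_mono mult_left_mono mult_right_mono) auto
  also have "\<dots> = t * ?h + t * (t * Lp * (norm d)^2)"
    by (simp add: power2_eq_square)
  also have "\<dots> \<le> \<rho> * t * ?h"
    using mult_left_mono[OF small, of t] \<open>0 < t\<close> by (simp add: algebra_simps)
  also have "\<dots> \<le> \<rho> * t * ?h * (w \<bullet> e)"
    using mult_left_mono_neg[of "w \<bullet> e" 1 "\<rho> * t * ?h"] e_C \<open>w \<in> C\<close> \<open>?h < 0\<close> \<rho> \<open>0 < t\<close>
    by (simp add: mult_pos_neg)
  finally show "0 \<le> w \<bullet> (F x + (\<rho> * t * ?h) *\<^sub>R e - F (x + t *\<^sub>R d))"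
    by (simp add: inner_diff_right inner_add_right)
qed


lemma armijo_small_step:
  assumes x: "cone_le K (F x) (F x0)" and h: "hfun J C x d < 0" and "0 < a"
    and small: "a * Lp * (norm d)^2 \<le> (1 - \<rho>) * (- hfun J C x d)"
  shows "cone_le K (F (x + a *\<^sub>R d)) (F x + (\<rho> * a * hfun J C x d) *\<^sub>R e)"
proof -
  \<comment> \<open>The Jacobian is Lipschitz only on \<Lambda>, so the segment is first shown to stay in the
      level set, by continuation from s = 0.\<close>
  let ?P = "\<lambda>s. cone_le K (F (x + s *\<^sub>R d)) (F x0)"
  have small_s: "s * Lp * (norm d)^2 \<le> (1 - \<rho>) * (- hfun J C x d)" if "s \<le> a" for s
  proof -
    have "s * Lp * (norm d)^2 \<le> a * Lp * (norm d)^2"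
      using that Lp_pos by (intro mult_right_mono) auto
    then show ?thesis using small by linarith
  qed
  have "\<forall>s\<in>{0..a}. ?P s"
  proof (rule interval_continuation)
    show "closed {s. ?P s}" by (rule closed_level_set)
    show "?P 0" using x by simp
    fix t assume "0 \<le> t" "t < a" and good: "\<forall>s\<in>{0..t}. ?P s"
    then have "\<forall>s\<in>{0..t}. x + s *\<^sub>R d \<in> \<Lambda>" using level_set_sub by blast
    then obtain \<epsilon> where "\<epsilon> > 0" and seg: "\<forall>s\<in>{0..t + \<epsilon>}. x + s *\<^sub>R d \<in> \<Lambda>"
      using segment_extends_in_open[OF \<Lambda>_open \<open>0 \<le> t\<close>] by blast
    have "?P s" if "s \<in> {t..t + min \<epsilon> (a - t)}" for s
    proof (cases "s = 0")
      case False
      then have "0 < s" "s \<le> a" using that \<open>0 \<le> t\<close> by auto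
      have "cone_le K (F (x + s *\<^sub>R d)) (F x + (\<rho> * s * hfun J C x d) *\<^sub>R e)"
        using seg that \<open>0 < s\<close> h small_s[OF \<open>s \<le> a\<close>] by (intro armijo_if_segment_in_\<Lambda>) auto
      then show ?thesis
        using armijo_decrease \<open>0 < s\<close> h K_le_trans[OF _ x] by (meson less_imp_le)
    qed (use x in simp)
    then show "\<exists>\<epsilon>>0. \<forall>s\<in>{t..t + \<epsilon>}. ?P s"
      using \<open>\<epsilon> > 0\<close> \<open>t < a\<close> by (intro exI[of _ "min \<epsilon> (a - t)"]) auto
  qed
  then have "\<forall>s\<in>{0..a}. x + s *\<^sub>R d \<in> \<Lambda>" using level_set_sub by blast
  then show ?thesis using \<open>0 < a\<close> h small by (rule armijo_if_segment_in_\<Lambda>)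
qed

lemma armijo_failure_bound:
  assumes "cone_le K (F x) (F x0)" "hfun J C x d < 0" "0 < a"
    and "\<not> cone_le K (F (x + a *\<^sub>R d)) (F x + (\<rho> * a * hfun J C x d) *\<^sub>R e)"
  shows "(1 - \<rho>) * (- hfun J C x d) < a * Lp * (norm d)^2"
  using armijo_small_step[OF assms(1-3)] assms(4) by fastforce

end

lemma cg_beta_bound:
  fixes hv hv' a q \<mu> \<beta> :: real
  assumes "hv < 0" "hv' < 0" "\<mu> > 2"
    and \<beta>: "\<beta> = (- hv * (\<bar>a\<bar> + a)) / max (\<mu> * \<bar>q * a\<bar>) (- \<mu> * hv' * \<bar>a\<bar>)"
  shows "0 \<le> \<beta>" "\<beta> * q \<le> - (2 / \<mu>) * hv"
proof -
  have "0 \<le> \<beta> \<and> \<beta> * q \<le> - (2 / \<mu>) * hv"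
  proof (cases "a \<le> 0")
    case True
    then show ?thesis using \<beta> \<open>hv < 0\<close> \<open>\<mu> > 2\<close> by (simp add: divide_neg_pos less_imp_le)
  next
    case False
    define D where "D = max (\<mu> * \<bar>q * a\<bar>) (- \<mu> * hv' * a)"
    have "\<mu> * hv' * a < 0" using False \<open>hv' < 0\<close> \<open>\<mu> > 2\<close> by (intro mult_neg_pos mult_pos_neg) auto
    then have "0 < D" by (simp add: D_def)
    have \<beta>D: "\<beta> = 2 * (- hv) * a / D" using \<beta> False by (simp add: D_def)
    then have "0 \<le> \<beta>"
      using \<open>0 < D\<close> \<open>hv < 0\<close> False by (simp only:) (intro divide_nonneg_pos mult_nonneg_nonneg; simp)
    have "\<beta> * q \<le> \<beta> * \<bar>q\<bar>" using \<open>0 \<le> \<beta>\<close> by (simp add: mult_left_mono)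
    also have "\<dots> = 2 * (- hv) * ((\<bar>q\<bar> * a) / D)" by (simp add: \<beta>D field_simps)
    also have "\<dots> \<le> 2 * (- hv) * (1 / \<mu>)"
      using \<open>0 < D\<close> \<open>\<mu> > 2\<close> \<open>hv < 0\<close> False
      by (intro mult_left_mono) (auto simp: D_def divide_simps abs_mult mult.commute)
    finally show ?thesis using \<open>0 \<le> \<beta>\<close> by simp
  qed
  then show "0 \<le> \<beta>" "\<beta> * q \<le> - (2 / \<mu>) * hv" by auto
qed

lemma hfun_cg_direction_le:
  fixes J :: "real^'n::finite \<Rightarrow> real^'n^'m::finite" and x d :: "nat \<Rightarrow> real^'n"
  assumes "finite C" "C \<noteq> {}" "\<mu> > 2"
    and v_descent: "\<And>k. hfun J C (x k) (vdir J C (x k)) < 0"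
    and d0: "d 0 = vdir J C (x 0)"
    and dk: "\<And>k. k \<ge> 1 \<Longrightarrow> d k = vdir J C (x k) + \<beta> k *\<^sub>R d (k - 1)"
    and \<beta>k: "\<And>k. k \<ge> 1 \<Longrightarrow> \<beta> k =
          (- hfun J C (x k) (vdir J C (x k))
             * (\<bar>hfun J C (x (k - 1)) (vdir J C (x k))\<bar> + hfun J C (x (k - 1)) (vdir J C (x k))))
          / max (\<mu> * \<bar>hfun J C (x k) (d (k - 1)) * hfun J C (x (k - 1)) (vdir J C (x k))\<bar>)
                (- \<mu> * hfun J C (x (k - 1)) (vdir J C (x (k - 1)))
                   * \<bar>hfun J C (x (k - 1)) (vdir J C (x k))\<bar>)"
  shows "hfun J C (x k) (d k) \<le> (1 - 2 / \<mu>) * hfun J C (x k) (vdir J C (x k))"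
proof (cases k)
  case 0
  then show ?thesis
    using d0 v_descent[of 0] \<open>\<mu> > 2\<close> by (simp add: algebra_simps divide_nonpos_pos)
next
  case (Suc j)
  let ?hv = "hfun J C (x k) (vdir J C (x k))"
  have "1 \<le> k" "k - 1 = j" using Suc by auto
  note \<beta> = \<beta>k[OF \<open>1 \<le> k\<close>, unfolded \<open>k - 1 = j\<close>]
  have "0 \<le> \<beta> k" and "\<beta> k * hfun J C (x k) (d j) \<le> - (2 / \<mu>) * ?hv"
    using cg_beta_bound[OF v_descent[of k] v_descent[of j] \<open>\<mu> > 2\<close> \<beta>] by auto
  have "hfun J C (x k) (d k) \<le> ?hv + hfun J C (x k) (\<beta> k *\<^sub>R d j)"
    using dk[of k] Suc hfun_add_le[OF assms(1,2)] by simp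
  also have "\<dots> \<le> ?hv + \<beta> k * hfun J C (x k) (d j)"
    using hfun_scaleR_le[OF assms(1,2) \<open>0 \<le> \<beta> k\<close>] by simp
  also have "\<dots> \<le> (1 - 2 / \<mu>) * ?hv"
    using \<open>\<beta> k * hfun J C (x k) (d j) \<le> - (2 / \<mu>) * ?hv\<close> by (simp add: algebra_simps)
  finally show ?thesis .
qed

locale armijo_sequence = armijo_setting K C F J \<rho> e \<Lambda> L Lp "x 0"
  for K C :: "(real^'m::finite) set" and F :: "real^'n::finite \<Rightarrow> real^'m" and J \<rho> e \<Lambda> L Lp
    and x :: "nat \<Rightarrow> real^'n" +
  fixes d :: "nat \<Rightarrow> real^'n" and \<alpha> \<tau> :: "nat \<Rightarrow> real" and \<delta> :: real
  assumes \<delta>: "0 < \<delta>" "\<delta> < 1"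
    and descent: "\<And>k. hfun J C (x k) (d k) < 0"
    and \<tau>_def: "\<And>k. \<tau> k = - hfun J C (x k) (d k) / (norm (d k))^2"
    and \<alpha>_in: "\<And>k. \<alpha> k \<in> {\<delta> ^ j * \<tau> k | j. True}"
    and \<alpha>_armijo: "\<And>k. cone_le K (F (x k + \<alpha> k *\<^sub>R d k))
                          (F (x k) + (\<rho> * \<alpha> k * hfun J C (x k) (d k)) *\<^sub>R e)"
    and \<alpha>_largest: "\<And>k a. a \<in> {\<delta> ^ j * \<tau> k | j. True} \<Longrightarrow>
          cone_le K (F (x k + a *\<^sub>R d k)) (F (x k) + (\<rho> * a * hfun J C (x k) (d k)) *\<^sub>R e)
          \<Longrightarrow> a \<le> \<alpha> k"
    and x_Suc: "\<And>k. x (Suc k) = x k + \<alpha> k *\<^sub>R d k"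
    and level_bounded: "\<forall>D :: nat \<Rightarrow> real^'m.
              (\<forall>k. D k \<in> F ` {z. cone_le K (F z) (F (x 0))}) \<and> (\<forall>k. cone_le K (D (Suc k)) (D k))
              \<longrightarrow> (\<exists>D0. \<forall>k. cone_le K D0 (D k))"
begin

lemma d_nonzero: "d k \<noteq> 0"
  using descent[of k] hfun_zero[OF C_fin C_nonempty, of J "x k"] by auto

lemma \<tau>_pos: "0 < \<tau> k"
  using descent[of k] d_nonzero[of k] by (simp add: \<tau>_def divide_neg_pos)

lemma \<alpha>_pos: "0 < \<alpha> k"
  using \<alpha>_in[of k] \<delta> \<tau>_pos[of k] by auto

lemma F_x_Suc_le: "cone_le K (F (x (Suc k))) (F (x k))"
  using armijo_decrease[OF less_imp_le[OF \<alpha>_pos] less_imp_le[OF descent] \<alpha>_armijo] x_Suc by simp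

lemma x_in_level_set: "cone_le K (F (x k)) (F (x 0))"
proof (induction k)
  case 0
  show ?case using cone_contains_0[OF K_cone] K_nonempty by (simp add: cone_le_def)
next
  case (Suc k)
  then show ?case using K_le_trans F_x_Suc_le by blast
qed

lemma summable_armijo_decrease: "summable (\<lambda>k. \<alpha> k * - hfun J C (x k) (d k))"
proof -
  obtain D0 where D0: "\<And>k. cone_le K D0 (F (x k))"
    using level_bounded[rule_format, of "\<lambda>k. F (x k)"] x_in_level_set F_x_Suc_le by blast
  obtain w where "w \<in> C" using C_nonempty by blast
  then have "w \<noteq> 0" using C_0 by auto
  have w: "w \<in> pos_polar K" "0 < w \<bullet> e"
    using C_sub_pos_polar \<open>w \<in> C\<close> pos_polar_inner_interior_pos[OF _ \<open>w \<noteq> 0\<close> e_int] by auto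
  have step: "\<rho> * (w \<bullet> e) * (\<alpha> k * - hfun J C (x k) (d k)) \<le> w \<bullet> F (x k) - w \<bullet> F (x (Suc k))" for k
    using pos_polar_inner_mono[OF w(1) \<alpha>_armijo[of k]] x_Suc[of k]
    by (simp add: algebra_simps)
  have "(\<Sum>k<N. \<alpha> k * - hfun J C (x k) (d k)) \<le> (w \<bullet> F (x 0) - w \<bullet> D0) / (\<rho> * (w \<bullet> e))" for N
  proof -
    have "\<rho> * (w \<bullet> e) * (\<Sum>k<N. \<alpha> k * - hfun J C (x k) (d k))
            \<le> (\<Sum>k<N. w \<bullet> F (x k) - w \<bullet> F (x (Suc k)))"
      unfolding sum_distrib_left by (intro sum_mono step)
    also have "\<dots> = w \<bullet> F (x 0) - w \<bullet> F (x N)" by (rule sum_lessThan_telescope')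
    also have "\<dots> \<le> w \<bullet> F (x 0) - w \<bullet> D0" using pos_polar_inner_mono[OF w(1) D0] by simp
    finally show ?thesis using \<rho> w(2) by (simp add: pos_le_divide_eq mult.commute)
  qed
  moreover have "0 \<le> \<alpha> k * - hfun J C (x k) (d k)" for k
    using \<alpha>_pos[of k] descent[of k] by (simp add: mult_pos_neg less_imp_le)
  ultimately show ?thesis by (intro summableI_nonneg_bounded)
qed

lemma sq_ratio_le_armijo_decrease:
  "(hfun J C (x k) (d k))^2 / (norm (d k))^2
     \<le> max 1 (Lp / (\<delta> * (1 - \<rho>))) * (\<alpha> k * - hfun J C (x k) (d k))"
proof -
  let ?h = "hfun J C (x k) (d k)" and ?n = "(norm (d k))^2"
  have "0 \<le> \<alpha> k * - ?h" using \<alpha>_pos[of k] descent[of k] by (simp add: mult_pos_neg less_imp_le)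
  obtain j where j: "\<alpha> k = \<delta> ^ j * \<tau> k" using \<alpha>_in[of k] by blast
  have "?h^2 / ?n \<le> \<alpha> k * - ?h \<or> ?h^2 / ?n \<le> Lp / (\<delta> * (1 - \<rho>)) * (\<alpha> k * - ?h)"
  proof (cases j)
    case 0
    then have "?h^2 / ?n = \<alpha> k * - ?h" using j by (simp add: \<tau>_def power2_eq_square)
    then show ?thesis by simp
  next
    case (Suc i)
    define a where "a = \<delta> ^ i * \<tau> k" \<comment> \<open>the trial step \<alpha>_k / \<delta>, rejected by maximality of \<alpha>_k\<close>
    have "\<alpha> k = \<delta> * a" "0 < a" using j Suc \<delta> \<tau>_pos[of k] by (simp_all add: a_def)
    then have "\<alpha> k < a" using \<delta> by simp
    then have "\<not> cone_le K (F (x k + a *\<^sub>R d k)) (F (x k) + (\<rho> * a * ?h) *\<^sub>R e)"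
      using \<alpha>_largest[of a k] by (force simp: a_def)
    then have "(1 - \<rho>) * - ?h < a * Lp * ?n"
      by (rule armijo_failure_bound[OF x_in_level_set descent \<open>0 < a\<close>])
    from mult_strict_right_mono[OF this, of "- ?h"] have "(1 - \<rho>) * ?h^2 < Lp * (a * - ?h) * ?n"
      using descent[of k] by (simp add: power2_eq_square algebra_simps)
    then have "?h^2 / ?n \<le> Lp * (a * - ?h) / (1 - \<rho>)"
      using \<rho> d_nonzero[of k] by (simp add: field_simps)
    also have "\<dots> = Lp / (\<delta> * (1 - \<rho>)) * (\<alpha> k * - ?h)"
      using \<open>\<alpha> k = \<delta> * a\<close> \<delta> \<rho> by (simp add: field_simps)
    finally show ?thesis by simp
  qed
  moreover have "\<alpha> k * - ?h \<le> max 1 (Lp / (\<delta> * (1 - \<rho>))) * (\<alpha> k * - ?h)"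
    and "Lp / (\<delta> * (1 - \<rho>)) * (\<alpha> k * - ?h) \<le> max 1 (Lp / (\<delta> * (1 - \<rho>))) * (\<alpha> k * - ?h)"
    using mult_right_mono[OF max.cobounded1[of 1 "Lp / (\<delta> * (1 - \<rho>))"] \<open>0 \<le> \<alpha> k * - ?h\<close>]
      mult_right_mono[OF max.cobounded2[of "Lp / (\<delta> * (1 - \<rho>))" 1] \<open>0 \<le> \<alpha> k * - ?h\<close>]
    by simp_all
  ultimately show ?thesis by linarith
qed

lemma summable_sq_ratio: "summable (\<lambda>k. (hfun J C (x k) (d k))^2 / (norm (d k))^2)"
  using sq_ratio_le_armijo_decrease
  by (intro summable_comparison_test'[OF summable_mult[OF summable_armijo_decrease]]) auto

end

theorem mainTheorem3:
  fixes K :: "(real^'m) set" and C :: "(real^'m) set"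
    and F :: "real^'n \<Rightarrow> real^'m" and J :: "real^'n \<Rightarrow> real^'n^'m"
    and \<rho> \<delta> \<mu> :: real and e :: "real^'m"
    and x d :: "nat \<Rightarrow> real^'n" and \<alpha> \<beta> \<tau> :: "nat \<Rightarrow> real"
  assumes K_pointed: "pointed K" and K_closed: "closed K" and K_convex: "convex K"
    and K_cone: "cone K" and K_int: "interior K \<noteq> {}"
    and K_fg: "\<exists>S. finite S \<and> K = convex hull (cone hull S)"
    and C_fin: "finite C" and C_0: "0 \<notin> C"
    and C_gen: "pos_polar K = cone hull (convex hull C)"
    and F_deriv: "\<And>z. (F has_derivative (\<lambda>u. J z *v u)) (at z)"
    and J_cont: "continuous_on UNIV J"
    and \<rho>: "0 < \<rho>" "\<rho> < 1" and \<delta>: "0 < \<delta>" "\<delta> < 1" and \<mu>: "\<mu> > 2"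
    and e_int: "e \<in> interior K" and e_C: "\<forall>w\<in>C. w \<bullet> e \<le> 1"
    and A1: "\<exists>\<Lambda> L. open \<Lambda> \<and> {z. cone_le K (F z) (F (x 0))} \<subseteq> \<Lambda> \<and>
              (\<forall>y\<in>\<Lambda>. \<forall>z\<in>\<Lambda>. onorm (\<lambda>u. (J y - J z) *v u) \<le> L * norm (y - z))"
    and A2: "\<forall>D :: nat \<Rightarrow> real^'m.
              (\<forall>k. D k \<in> F ` {z. cone_le K (F z) (F (x 0))}) \<and> (\<forall>k. cone_le K (D (Suc k)) (D k))
              \<longrightarrow> (\<exists>D0. \<forall>k. cone_le K D0 (D k))"
    and d0: "d 0 = vdir J C (x 0)"
    and dk: "\<And>k. k \<ge> 1 \<Longrightarrow> d k = vdir J C (x k) + \<beta> k *\<^sub>R d (k - 1)"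
    and \<beta>k: "\<And>k. k \<ge> 1 \<Longrightarrow> \<beta> k =
          (- hfun J C (x k) (vdir J C (x k))
             * (\<bar>hfun J C (x (k - 1)) (vdir J C (x k))\<bar> + hfun J C (x (k - 1)) (vdir J C (x k))))
          / max (\<mu> * \<bar>hfun J C (x k) (d (k - 1)) * hfun J C (x (k - 1)) (vdir J C (x k))\<bar>)
                (- \<mu> * hfun J C (x (k - 1)) (vdir J C (x (k - 1)))
                   * \<bar>hfun J C (x (k - 1)) (vdir J C (x k))\<bar>)"
    and \<tau>k: "\<And>k. \<tau> k = - hfun J C (x k) (d k) / (norm (d k))^2"
    and \<alpha>k_in: "\<And>k. \<alpha> k \<in> {\<delta> ^ j * \<tau> k | j. True}"
    and \<alpha>k_armijo: "\<And>k. cone_le K (F (x k + \<alpha> k *\<^sub>R d k))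
                          (F (x k) + (\<rho> * \<alpha> k * hfun J C (x k) (d k)) *\<^sub>R e)"
    and \<alpha>k_largest: "\<And>k a. a \<in> {\<delta> ^ j * \<tau> k | j. True} \<Longrightarrow>
          cone_le K (F (x k + a *\<^sub>R d k)) (F (x k) + (\<rho> * a * hfun J C (x k) (d k)) *\<^sub>R e)
          \<Longrightarrow> a \<le> \<alpha> k"
    and xk: "\<And>k. x (Suc k) = x k + \<alpha> k *\<^sub>R d k"
    and infinite: "\<And>k. vdir J C (x k) \<noteq> 0"
  shows "summable (\<lambda>k. (hfun J C (x k) (d k))^2 / (norm (d k))^2)"
proof -
  obtain \<Lambda> L where "open \<Lambda>" and level_sub: "{z. cone_le K (F z) (F (x 0))} \<subseteq> \<Lambda>"
    and J_lip: "\<forall>y\<in>\<Lambda>. \<forall>z\<in>\<Lambda>. onorm (\<lambda>u. (J y - J z) *v u) \<le> L * norm (y - z)"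
    using A1 by blast
  obtain W where "W > 0" and W: "\<And>w. w \<in> C \<Longrightarrow> norm w \<le> W"
    using bounded_pos finite_imp_bounded[OF C_fin] by metis
  define Lp where "Lp = \<bar>L\<bar> * W + 1"
  have "\<bar>L\<bar> * norm w \<le> Lp" if "w \<in> C" for w
    using mult_left_mono[OF W[OF that], of "\<bar>L\<bar>"] by (simp add: Lp_def)
  then have setting: "armijo_setting K C F J \<rho> e \<Lambda> L Lp (x 0)"
    using K_closed K_convex K_cone C_fin C_0 C_gen F_deriv \<open>open \<Lambda>\<close> level_sub J_lip e_int e_C \<rho>
      \<open>W > 0\<close>
    by unfold_locales (auto simp: Lp_def intro: add_nonneg_pos)
  have C_ne: "C \<noteq> {}" by (rule armijo_setting.C_nonempty[OF setting])
  have v_descent: "\<And>k. hfun J C (x k) (vdir J C (x k)) < 0"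
    using hfun_vdir_neg[OF C_fin C_ne infinite] .
  have "0 < 1 - 2 / \<mu>" using \<mu> by simp
  then have "hfun J C (x k) (d k) < 0" for k
    using hfun_cg_direction_le[where \<beta> = \<beta>, OF C_fin C_ne \<mu> v_descent d0 dk \<beta>k] v_descent[of k]
    by (meson mult_pos_neg order.strict_trans1)
  then have "armijo_sequence K C F J \<rho> e \<Lambda> L Lp x d \<alpha> \<tau> \<delta>"
    using setting \<delta> \<tau>k \<alpha>k_in \<alpha>k_armijo \<alpha>k_largest xk A2
    by (intro armijo_sequence.intro armijo_sequence_axioms.intro) auto
  then show ?thesis by (rule armijo_sequence.summable_sq_ratio)
qed

end
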